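(* Let $F\colon\mathbb{R}^{n\times m}\to\mathbb{R}$ be continuous with $|F(X)|\le C(|X|^p+1)$ for some $C\in(0,\infty)$ and all $X$. Then either $\mathcal{Q}F\equiv-\infty$, or $\mathcal{Q}F$ is real-valued everywhere and satisfies $|\mathcal{Q}F(X)|\le C'(|X|^p+1)$ for all $X$, for some constant $C'$.
   Context: Fix integers $N,n\ge1$, a vector $\mathbf a=(a_1,\dots,a_N)$ of positive integers and $p\in(1,\infty)$. $\langle\alpha,\mathbf a^{-1}\rangle=\sum_j\alpha_j/a_j$ for $\alpha\in\mathbb{Z}_{\ge0}^N$; $m$ is the number of $\alpha$ with $\langle\alpha,\mathbf a^{-1}\rangle=1$. For smooth $u$, $\nabla_{\mathbf a}u=(\partial^\alpha u)_{\langle\alpha,\mathbf a^{-1}\rangle=1}\in\mathbb{R}^{n\times m}$. $Q=(-1,1)^N$. $\mathcal{Q}F(V)=\inf\{\frac1{|Q|}\int_QF(V+\nabla_{\mathbf a}u)\,\mathrm{d}x:u\in C_c^\infty(Q;\mathbb{R}^n)\}$. *)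

theory Defs
  imports "HOL-Analysis.Analysis"
begin

definition partial_dir :: "'N::finite \<Rightarrow> (real^'N \<Rightarrow> real) \<Rightarrow> real^'N \<Rightarrow> real" where
  "partial_dir j f = (\<lambda>x. frechet_derivative f (at x) (axis j 1))"

definition partials :: "'N::finite list \<Rightarrow> (real^'N \<Rightarrow> real) \<Rightarrow> real^'N \<Rightarrow> real" where
  "partials js f = foldr partial_dir js f"

definition smooth_fun :: "(real^'N::finite \<Rightarrow> real) \<Rightarrow> bool" where
  "smooth_fun f \<longleftrightarrow> (\<forall>js. partials js f differentiable_on UNIV)"

text \<open>Multi-index partial derivative \<partial>^\<alpha>: differentiate \<alpha> j times in direction j
  (the order is irrelevant for smooth functions by Schwarz's theorem).\<close>
definition mpartial :: "('N::finite \<Rightarrow> nat) \<Rightarrow> (real^'N \<Rightarrow> real) \<Rightarrow> real^'N \<Rightarrow> real" where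
  "mpartial \<alpha> f = partials (SOME js. \<forall>j. count_list js j = \<alpha> j) f"

definition cubeQ :: "(real^'N::finite) set" where
  "cubeQ = box (-1) 1"

definition Cc_inf :: "(real^'N::finite \<Rightarrow> real^'n::finite) set" where
  "Cc_inf = {u. (\<forall>i. smooth_fun (\<lambda>x. u x $ i)) \<and> closure {x. u x \<noteq> 0} \<subseteq> cubeQ}"

definition aidx :: "('N::finite \<Rightarrow> nat) \<Rightarrow> ('N \<Rightarrow> nat) set" where
  "aidx a = {\<alpha>. (\<Sum>j\<in>UNIV. real (\<alpha> j) / real (a j)) = 1}"

text \<open>The anisotropic gradient \<nabla>_a u, an n x m matrix; the m columns are indexed by the finite
  type 'm via an enumeration idx of the multi-indices in aidx a.\<close>
definition grad_a :: "('m::finite \<Rightarrow> ('N::finite \<Rightarrow> nat)) \<Rightarrow> (real^'N \<Rightarrow> real^'n::finite)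
    \<Rightarrow> real^'N \<Rightarrow> real^'m^'n" where
  "grad_a idx u x = (\<chi> i. \<chi> k. mpartial (idx k) (\<lambda>y. u y $ i) x)"

definition QF :: "('m::finite \<Rightarrow> ('N::finite \<Rightarrow> nat)) \<Rightarrow> (real^'m^'n::finite \<Rightarrow> real)
    \<Rightarrow> real^'m^'n \<Rightarrow> ereal" where
  "QF idx F V = (INF u\<in>(Cc_inf :: (real^'N \<Rightarrow> real^'n) set).
      ereal ((1 / measure lborel (cubeQ :: (real^'N) set)) *
             (LINT x:cubeQ|lborel. F (V + grad_a idx u x))))"

end

(* If QF F X0 > -\<infinity> for a single X0, every competitor u for an arbitrary X = X0 + Y yields
   one for X0. Rescale u anisotropically into a small box, t * u (c_1 x_1, ..., c_N x_N) with
   t * (\<Prod>j. c_j ^ \<alpha>_j) = 1 whenever <\<alpha>, a^-1> = 1, which does not change its anisotropic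
   gradient, and add the corrector \<Sum>_l Y_l \<psi>(x) x^\<alpha>_l / \<alpha>_l!, with a cut-off \<psi> equal to 1 near
   the box. The anisotropic gradient of the new competitor is that of u (rescaled) plus Y on the
   box and is bounded by K |Y| elsewhere, so the growth bound gives
   QF F X0 \<le> (energy of u at X) / (\<Prod>j. c_j) + C ((|X0| + K |Y|)^p + 1):
   a lower bound of order |X|^p, uniform in u. The upper bound QF F X \<le> F X comes from u = 0. *)

theory Submission
  imports Defs "HOL-Computational_Algebra.Polynomial" "HOL-Library.Multiset"
begin

section \<open>Partial derivatives\<close>

lemma partials_Nil [simp]: "partials [] f = f"
  by (simp add: partials_def)

lemma partials_Cons [simp]: "partials (j # js) f = partial_dir j (partials js f)"
  by (simp add: partials_def)

lemma partial_dir_eq_derivative: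
  assumes "(f has_derivative f') (at x)"
  shows "partial_dir j f x = f' (axis j 1)"
  using frechet_derivative_at[OF assms] by (simp add: partial_dir_def)

lemma partial_dir_cong_open:
  assumes "open U" "x \<in> U" "\<And>y. y \<in> U \<Longrightarrow> f y = g y"
  shows "partial_dir j f x = partial_dir j g x"
proof -
  have "(f has_derivative D) (at x) \<longleftrightarrow> (g has_derivative D) (at x)" for D
    using has_derivative_transform_within_open[OF _ assms(1,2), of f D UNIV g]
      has_derivative_transform_within_open[OF _ assms(1,2), of g D UNIV f] assms(3) by auto
  then show ?thesis by (simp add: partial_dir_def frechet_derivative_def)
qed

lemma partials_cong_open:
  assumes "open U" "x \<in> U" "\<And>y. y \<in> U \<Longrightarrow> f y = g y"
  shows "partials js f x = partials js g x"
  using assms(2)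
proof (induction js arbitrary: x)
  case (Cons j js)
  then show ?case
    using partial_dir_cong_open[OF assms(1), of x "partials js f" "partials js g"] by simp
qed (use assms(3) in simp)

lemma partials_zero [simp]: "partials js (\<lambda>x. 0) = (\<lambda>x. 0)"
proof (induction js)
  case (Cons j js)
  have "partial_dir j (\<lambda>x::real^'a. 0::real) x = 0" for x
    using partial_dir_eq_derivative[of "\<lambda>x::real^'a. 0::real" "\<lambda>_. 0" x j] by simp
  then show ?case by (simp add: Cons.IH fun_eq_iff)
qed simp

lemma smooth_fun_differentiable: "smooth_fun f \<Longrightarrow> partials js f differentiable (at x)"
  unfolding smooth_fun_def differentiable_on_def by auto

lemma partial_dir_add:
  assumes "f differentiable (at x)" "g differentiable (at x)"
  shows "partial_dir j (\<lambda>x. f x + g x) x = partial_dir j f x + partial_dir j g x"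
proof -
  obtain f' g' where f': "(f has_derivative f') (at x)" and g': "(g has_derivative g') (at x)"
    using assms unfolding differentiable_def by blast
  show ?thesis
    using partial_dir_eq_derivative[OF has_derivative_add[OF f' g']]
      partial_dir_eq_derivative[OF f'] partial_dir_eq_derivative[OF g'] by simp
qed

lemma partial_dir_cmult:
  assumes "f differentiable (at x)"
  shows "partial_dir j (\<lambda>x. c * f x) x = c * partial_dir j f x"
proof -
  obtain f' where f': "(f has_derivative f') (at x)"
    using assms unfolding differentiable_def by blast
  show ?thesis
    using partial_dir_eq_derivative[OF has_derivative_mult_right[OF f']]
      partial_dir_eq_derivative[OF f'] by simp
qed

lemma partial_dir_mult:
  assumes "f differentiable (at x)" "g differentiable (at x)"
  shows "partial_dir j (\<lambda>x. f x * g x) x = f x * partial_dir j g x + partial_dir j f x * g x"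
proof -
  obtain f' g' where f': "(f has_derivative f') (at x)" and g': "(g has_derivative g') (at x)"
    using assms unfolding differentiable_def by blast
  show ?thesis
    using partial_dir_eq_derivative[OF has_derivative_mult[OF f' g']]
      partial_dir_eq_derivative[OF f'] partial_dir_eq_derivative[OF g'] by simp
qed

lemma partial_dir_inverse:
  assumes "f differentiable (at x)" "f x \<noteq> 0"
  shows "partial_dir j (\<lambda>x. inverse (f x)) x = - (inverse (f x) * partial_dir j f x * inverse (f x))"
proof -
  obtain f' where f': "(f has_derivative f') (at x)"
    using assms unfolding differentiable_def by blast
  show ?thesis
    using partial_dir_eq_derivative[OF Deriv.has_derivative_inverse[OF assms(2) f']]
      partial_dir_eq_derivative[OF f'] by simp
qed

lemma partials_add:
  assumes "smooth_fun f" "smooth_fun g"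
  shows "partials js (\<lambda>x. f x + g x) = (\<lambda>x. partials js f x + partials js g x)"
proof (induction js)
  case (Cons j js)
  show ?case
    unfolding partials_Cons Cons.IH
    using partial_dir_add[OF smooth_fun_differentiable[OF assms(1)] smooth_fun_differentiable[OF assms(2)]]
    by (simp add: fun_eq_iff)
qed simp

lemma partials_cmult:
  assumes "smooth_fun f"
  shows "partials js (\<lambda>x. c * f x) = (\<lambda>x. c * partials js f x)"
proof (induction js)
  case (Cons j js)
  show ?case
    unfolding partials_Cons Cons.IH
    using partial_dir_cmult[OF smooth_fun_differentiable[OF assms]] by (simp add: fun_eq_iff)
qed simp

lemma smooth_fun_add: "smooth_fun f \<Longrightarrow> smooth_fun g \<Longrightarrow> smooth_fun (\<lambda>x. f x + g x)"
  unfolding smooth_fun_def by (auto simp: partials_add smooth_fun_def)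

lemma smooth_fun_cmult: "smooth_fun f \<Longrightarrow> smooth_fun (\<lambda>x. c * f x)"
  unfolding smooth_fun_def by (auto simp: partials_cmult smooth_fun_def)

lemma smooth_fun_sum:
  "finite L \<Longrightarrow> (\<And>l. l \<in> L \<Longrightarrow> smooth_fun (f l)) \<Longrightarrow> smooth_fun (\<lambda>x. \<Sum>l\<in>L. f l x)"
proof (induction L rule: finite_induct)
  case empty
  show ?case by (simp add: smooth_fun_def)
next
  case (insert l L)
  then show ?case by (simp add: smooth_fun_add)
qed

lemma partials_sum:
  "finite L \<Longrightarrow> (\<And>l. l \<in> L \<Longrightarrow> smooth_fun (f l)) \<Longrightarrow>
    partials js (\<lambda>x. \<Sum>l\<in>L. f l x) = (\<lambda>x. \<Sum>l\<in>L. partials js (f l) x)"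
proof (induction L rule: finite_induct)
  case (insert l L)
  then show ?case by (simp add: partials_add smooth_fun_sum)
qed simp

definition stretch :: "('N::finite \<Rightarrow> real) \<Rightarrow> real^'N \<Rightarrow> real^'N" where
  "stretch c x = (\<chi> j. c j * x $ j)"

lemma bounded_linear_stretch:
  fixes c :: "'N::finite \<Rightarrow> real"
  shows "bounded_linear (stretch c)"
  unfolding stretch_def
proof (rule bounded_linear_intro[where K = "\<Sum>j\<in>UNIV. \<bar>c j\<bar>"])
  fix x :: "real^'N"
  have "norm (\<chi> j. c j * x $ j) \<le> (\<Sum>j\<in>UNIV. \<bar>c j * x $ j\<bar>)"
    using norm_le_l1_cart[of "\<chi> j. c j * x $ j"] by simp
  also have "\<dots> \<le> (\<Sum>j\<in>UNIV. \<bar>c j\<bar> * norm x)"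
    by (rule sum_mono) (auto simp: abs_mult intro: mult_left_mono component_le_norm_cart)
  finally show "norm (\<chi> j. c j * x $ j) \<le> norm x * (\<Sum>j\<in>UNIV. \<bar>c j\<bar>)"
    by (simp add: sum_distrib_left mult.commute)
qed (auto simp: vec_eq_iff algebra_simps)

lemma prod_count_list_Cons:
  fixes j :: "'a::finite" and g :: "'a \<Rightarrow> nat \<Rightarrow> 'b::comm_monoid_mult"
  assumes "\<And>i n. g i (Suc n) = g i n * h i n"
  shows "(\<Prod>i\<in>UNIV. g i (count_list (j # js) i)) = (\<Prod>i\<in>UNIV. g i (count_list js i)) * h j (count_list js j)"
proof -
  have "(\<Prod>i\<in>UNIV. g i (count_list (j # js) i)) = g j (Suc (count_list js j)) * (\<Prod>i\<in>UNIV - {j}. g i (count_list js i))"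
    by (subst prod.remove[of _ j]) (auto intro!: prod.cong)
  also have "\<dots> = (\<Prod>i\<in>UNIV. g i (count_list js i)) * h j (count_list js j)"
    by (subst (2) prod.remove[of _ j]) (auto simp: assms ac_simps)
  finally show ?thesis .
qed

lemma partials_stretch:
  assumes "smooth_fun f"
  shows "partials js (\<lambda>x. f (stretch c x)) =
    (\<lambda>x. (\<Prod>i\<in>UNIV. c i ^ count_list js i) * partials js f (stretch c x))"
proof (induction js)
  case (Cons j js)
  let ?K = "\<Prod>i\<in>UNIV. c i ^ count_list js i"
  have "partial_dir j (\<lambda>x. ?K * partials js f (stretch c x)) x = ?K * c j * partial_dir j (partials js f) (stretch c x)" for x
  proof -
    obtain g' where g': "(partials js f has_derivative g') (at (stretch c x))"
      using smooth_fun_differentiable[OF assms] unfolding differentiable_def by blast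
    have d: "((\<lambda>x. ?K * partials js f (stretch c x)) has_derivative (\<lambda>v. ?K * g' (stretch c v))) (at x)"
      using has_derivative_compose[OF bounded_linear_imp_has_derivative[OF bounded_linear_stretch] g']
      by (rule has_derivative_mult_right)
    have "g' (stretch c (axis j 1)) = c j * g' (axis j 1)"
    proof -
      have "stretch c (axis j 1) = c j *\<^sub>R axis j 1"
        by (auto simp: stretch_def axis_def vec_eq_iff)
      then show ?thesis using linear_scale[OF has_derivative_linear[OF g']] by simp
    qed
    then show ?thesis
      using partial_dir_eq_derivative[OF d, of j] partial_dir_eq_derivative[OF g', of j] by simp
  qed
  moreover have "(\<Prod>i\<in>UNIV. c i ^ count_list (j # js) i) = ?K * c j"
    by (rule prod_count_list_Cons) simp
  ultimately show ?case
    unfolding partials_Cons Cons.IH by (simp only: fun_eq_iff) simp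
qed simp

lemma smooth_fun_stretch:
  assumes "smooth_fun f"
  shows "smooth_fun (\<lambda>x. f (stretch c x))"
proof -
  have "(\<lambda>x. partials js f (stretch c x)) differentiable (at x)" for js x
    using differentiable_chain_at[OF bounded_linear_imp_differentiable[OF bounded_linear_stretch]
        smooth_fun_differentiable[OF assms]]
    by (simp add: o_def)
  then show ?thesis
    unfolding smooth_fun_def partials_stretch[OF assms]
    by (auto simp: differentiable_on_def intro!: differentiable_mult)
qed

lemma ex_count_list_eq: "\<exists>js. \<forall>j. count_list js j = (\<alpha> :: 'a::finite \<Rightarrow> nat) j"
proof -
  obtain js where "mset js = Abs_multiset \<alpha>"
    using ex_mset by blast
  then show ?thesis
    by (metis count_Abs_multiset count_mset finite_class.finite_UNIV rev_finite_subset subset_UNIV)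
qed

text \<open>\<open>mpartial \<beta>\<close> differentiates along an unspecified list with the prescribed counts; every
  formula below depends on the counts only.\<close>

lemma count_list_mpartial:
  fixes \<alpha> :: "'a::finite \<Rightarrow> nat"
  shows "count_list (SOME js. \<forall>j. count_list js j = \<alpha> j) j = \<alpha> j"
  using someI_ex[OF ex_count_list_eq[of \<alpha>]] by blast

lemma mpartial_zero [simp]: "mpartial \<beta> (\<lambda>x. 0) x = 0"
  by (simp add: mpartial_def)

lemma mpartial_stretch:
  "smooth_fun f \<Longrightarrow> mpartial \<beta> (\<lambda>x. f (stretch c x)) x = (\<Prod>i\<in>UNIV. c i ^ \<beta> i) * mpartial \<beta> f (stretch c x)"
  by (simp add: mpartial_def partials_stretch count_list_mpartial)

section \<open>A class of smooth functions\<close>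

text \<open>\<open>flat_exp k\<close> is the \<open>k\<close>-th derivative of the smooth function that is \<open>exp (-1/t)\<close> for
  \<open>t > 0\<close> and \<open>0\<close> otherwise: differentiating \<open>P (1/t) * exp (-1/t)\<close> gives
  \<open>(1/t)\<^sup>2 * (P - P') (1/t) * exp (-1/t)\<close>.\<close>

fun flat_exp_poly :: "nat \<Rightarrow> real poly" where
  "flat_exp_poly 0 = 1"
| "flat_exp_poly (Suc k) = [:0, 0, 1:] * (flat_exp_poly k - pderiv (flat_exp_poly k))"

definition flat_exp :: "nat \<Rightarrow> real \<Rightarrow> real" where
  "flat_exp k t = (if t > 0 then poly (flat_exp_poly k) (1 / t) * exp (- 1 / t) else 0)"

lemma poly_times_exp_neg_tendsto_0: "((\<lambda>y. poly P y * exp (- y)) \<longlongrightarrow> (0::real)) at_top"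
proof -
  have "((\<lambda>y. \<Sum>i\<le>degree P. coeff P i * (y ^ i / exp y)) \<longlongrightarrow> (\<Sum>i\<le>degree P. coeff P i * 0)) at_top"
    by (intro tendsto_intros tendsto_power_div_exp_0)
  moreover have "poly P y * exp (- y) = (\<Sum>i\<le>degree P. coeff P i * (y ^ i / exp y))" for y
  proof -
    have "(\<Sum>i\<le>degree P. coeff P i * (y ^ i / exp y)) = (\<Sum>i\<le>degree P. coeff P i * y ^ i) / exp y"
      by (simp add: sum_divide_distrib)
    then show ?thesis by (simp add: poly_altdef exp_minus divide_inverse)
  qed
  ultimately show ?thesis by simp
qed

lemma flat_exp_over_t_tendsto_0: "((\<lambda>t. flat_exp k t / t) \<longlongrightarrow> 0) (at_right 0)"
proof -
  have lim: "((\<lambda>t. poly ([:0, 1:] * flat_exp_poly k) (inverse t) * exp (- inverse t)) \<longlongrightarrow> (0::real)) (at_right 0)"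
    by (rule filterlim_compose[OF poly_times_exp_neg_tendsto_0 filterlim_inverse_at_top_right])
  have ev: "\<forall>\<^sub>F t in at_right 0. poly ([:0, 1:] * flat_exp_poly k) (inverse t) * exp (- inverse t) = flat_exp k t / t"
  proof (rule eventually_at_rightI[of 0 1])
    fix t :: real
    assume "t \<in> {0<..<1}"
    then show "poly ([:0, 1:] * flat_exp_poly k) (inverse t) * exp (- inverse t) = flat_exp k t / t"
      by (simp add: flat_exp_def divide_inverse mult_ac)
  qed simp
  then show ?thesis
    using tendsto_cong[OF ev] lim by simp
qed

lemma flat_exp_has_derivative_pos:
  assumes "t > 0"
  shows "(flat_exp k has_real_derivative flat_exp (Suc k) t) (at t)"
proof -
  let ?P = "flat_exp_poly k"
  have "((\<lambda>s. poly ?P (1 / s) * exp (- 1 / s)) has_real_derivative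
      poly ?P (1 / t) * (exp (- 1 / t) * (1 / t\<^sup>2)) + poly (pderiv ?P) (1 / t) * (- 1 / t\<^sup>2) * exp (- 1 / t)) (at t)"
    using assms by (auto intro!: derivative_eq_intros simp: power2_eq_square field_simps)
  moreover have "flat_exp (Suc k) t = (1 / t)\<^sup>2 * (poly ?P (1 / t) - poly (pderiv ?P) (1 / t)) * exp (- 1 / t)"
    using assms by (simp add: flat_exp_def power2_eq_square algebra_simps)
  moreover have "\<dots> = poly ?P (1 / t) * (exp (- 1 / t) * (1 / t\<^sup>2)) + poly (pderiv ?P) (1 / t) * (- 1 / t\<^sup>2) * exp (- 1 / t)"
    using assms by (simp add: field_simps power2_eq_square)
  ultimately have "((\<lambda>s. poly ?P (1 / s) * exp (- 1 / s)) has_real_derivative flat_exp (Suc k) t) (at t)"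
    by simp
  then show ?thesis
    by (rule has_field_derivative_transform_within_open[of _ _ _ "{0<..}"]) (use assms in \<open>auto simp: flat_exp_def\<close>)
qed

lemma flat_exp_has_derivative_nonpos:
  assumes "t \<le> 0"
  shows "(flat_exp k has_real_derivative flat_exp (Suc k) t) (at t)"
proof (cases "t = 0")
  case True
  have "((\<lambda>s. (flat_exp k s - flat_exp k 0) / (s - 0)) \<longlongrightarrow> 0) (at 0)"
    unfolding filterlim_at_split
  proof
    show "((\<lambda>s. (flat_exp k s - flat_exp k 0) / (s - 0)) \<longlongrightarrow> 0) (at_left 0)"
    proof (rule tendsto_eventually)
      show "\<forall>\<^sub>F s in at_left 0. (flat_exp k s - flat_exp k 0) / (s - 0) = 0"
        by (rule eventually_at_leftI[of "-1"]) (auto simp: flat_exp_def)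
    qed
    show "((\<lambda>s. (flat_exp k s - flat_exp k 0) / (s - 0)) \<longlongrightarrow> 0) (at_right 0)"
      using flat_exp_over_t_tendsto_0 by (simp add: flat_exp_def)
  qed
  then show ?thesis
    using True by (simp add: has_field_derivative_iff flat_exp_def)
next
  case False
  have "((\<lambda>s. 0) has_real_derivative 0) (at t)"
    by simp
  then have "(flat_exp k has_real_derivative 0) (at t)"
    by (rule has_field_derivative_transform_within_open[of _ _ _ "{..<0}"])
      (use assms False in \<open>auto simp: flat_exp_def\<close>)
  then show ?thesis
    using assms by (simp add: flat_exp_def)
qed

lemma flat_exp_has_derivative: "(flat_exp k has_real_derivative flat_exp (Suc k) t) (at t)"
  using flat_exp_has_derivative_pos flat_exp_has_derivative_nonpos by (cases "t > 0") auto

text \<open>Smoothness of the test functions built below is proved through this class, which is closed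
  under partial differentiation.\<close>

inductive_set elementary_smooth :: "(real^'N::finite \<Rightarrow> real) set" where
  const: "(\<lambda>x. c) \<in> elementary_smooth"
| coord: "(\<lambda>x. x $ i) \<in> elementary_smooth"
| flat_exp: "(\<lambda>x. flat_exp k (c + d * x $ i)) \<in> elementary_smooth"
| add: "f \<in> elementary_smooth \<Longrightarrow> g \<in> elementary_smooth \<Longrightarrow> (\<lambda>x. f x + g x) \<in> elementary_smooth"
| mult: "f \<in> elementary_smooth \<Longrightarrow> g \<in> elementary_smooth \<Longrightarrow> (\<lambda>x. f x * g x) \<in> elementary_smooth"
| inverse: "f \<in> elementary_smooth \<Longrightarrow> (\<forall>x. f x \<noteq> 0) \<Longrightarrow> (\<lambda>x. inverse (f x)) \<in> elementary_smooth"

lemma elementary_smooth_differentiable_partial_dir: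
  assumes "f \<in> elementary_smooth"
  shows "(\<forall>x. f differentiable (at x)) \<and> (\<forall>j. partial_dir j f \<in> elementary_smooth)"
  using assms
proof induction
  case (const c)
  have "partial_dir j (\<lambda>x::real^'a. c) = (\<lambda>x. 0)" for j
    using partial_dir_eq_derivative[of "\<lambda>x::real^'a. c" "\<lambda>_. 0"] by (auto simp: fun_eq_iff)
  then show ?case
    by (auto intro: elementary_smooth.const)
next
  case (coord i)
  have D: "((\<lambda>x::real^'a. x $ i) has_derivative (\<lambda>v. v $ i)) (at x)" for x
    by (rule bounded_linear_imp_has_derivative) (rule bounded_linear_vec_nth)
  have "partial_dir j (\<lambda>x::real^'a. x $ i) = (\<lambda>x. if j = i then 1 else 0)" for j
    using partial_dir_eq_derivative[OF D] by (auto simp: fun_eq_iff axis_def)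
  then show ?case
    using D by (auto intro: elementary_smooth.const differentiableI)
next
  case (flat_exp k c d i)
  have D: "((\<lambda>x::real^'a. flat_exp k (c + d * x $ i)) has_derivative
      (\<lambda>v. flat_exp (Suc k) (c + d * x $ i) * (d * v $ i))) (at x)" for x
  proof -
    have "((\<lambda>x::real^'a. c + d * x $ i) has_derivative (\<lambda>v. 0 + d * v $ i)) (at x)"
      by (intro has_derivative_add has_derivative_const has_derivative_mult_right
          bounded_linear_imp_has_derivative bounded_linear_vec_nth)
    from has_derivative_compose[OF this flat_exp_has_derivative[unfolded has_field_derivative_def]]
    show ?thesis by simp
  qed
  have "partial_dir j (\<lambda>x::real^'a. flat_exp k (c + d * x $ i)) =
      (\<lambda>x. (if j = i then d else 0) * flat_exp (Suc k) (c + d * x $ i))" for j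
    using partial_dir_eq_derivative[OF D] by (auto simp: fun_eq_iff axis_def)
  then show ?case
    using D by (auto intro!: elementary_smooth.intros differentiableI)
next
  case (add f g)
  then have "partial_dir j (\<lambda>x. f x + g x) = (\<lambda>x. partial_dir j f x + partial_dir j g x)" for j
    by (simp add: fun_eq_iff partial_dir_add)
  with add show ?case
    by (auto intro: elementary_smooth.add)
next
  case (mult f g)
  then have "partial_dir j (\<lambda>x. f x * g x) = (\<lambda>x. f x * partial_dir j g x + partial_dir j f x * g x)" for j
    by (simp add: fun_eq_iff partial_dir_mult)
  with mult show ?case
    by (auto intro!: elementary_smooth.add elementary_smooth.mult)
next
  case (inverse f)
  then have "partial_dir j (\<lambda>x. inverse (f x)) =
      (\<lambda>x. (- 1) * (inverse (f x) * partial_dir j f x * inverse (f x)))" for j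
    by (simp add: fun_eq_iff partial_dir_inverse)
  moreover have "(\<lambda>x. (- 1) * (inverse (f x) * partial_dir j f x * inverse (f x))) \<in> elementary_smooth" for j
    using inverse by (intro elementary_smooth.mult elementary_smooth.const elementary_smooth.inverse) auto
  ultimately show ?case
    using inverse by (auto simp del: mult_minus_left)
qed

lemma elementary_smooth_differentiable: "f \<in> elementary_smooth \<Longrightarrow> f differentiable (at x)"
  using elementary_smooth_differentiable_partial_dir by blast

lemma elementary_smooth_partials: "f \<in> elementary_smooth \<Longrightarrow> partials js f \<in> elementary_smooth"
  by (induction js) (auto dest: elementary_smooth_differentiable_partial_dir)

lemma elementary_smooth_smooth_fun: "f \<in> elementary_smooth \<Longrightarrow> smooth_fun f"
  unfolding smooth_fun_def differentiable_on_def
  by (auto intro: differentiable_at_withinI elementary_smooth_differentiable elementary_smooth_partials)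

lemma elementary_smooth_continuous_on: "f \<in> elementary_smooth \<Longrightarrow> continuous_on S f"
  by (intro differentiable_imp_continuous_on differentiable_at_imp_differentiable_on ballI
      elementary_smooth_differentiable)

lemma elementary_smooth_prod:
  "finite I \<Longrightarrow> (\<And>i. i \<in> I \<Longrightarrow> f i \<in> elementary_smooth) \<Longrightarrow> (\<lambda>x. \<Prod>i\<in>I. f i x) \<in> elementary_smooth"
  by (induction I rule: finite_induct) (auto intro: elementary_smooth.const elementary_smooth.mult)

lemma elementary_smooth_sum:
  "finite I \<Longrightarrow> (\<And>i. i \<in> I \<Longrightarrow> f i \<in> elementary_smooth) \<Longrightarrow> (\<lambda>x. \<Sum>i\<in>I. f i x) \<in> elementary_smooth"
  by (induction I rule: finite_induct) (auto intro: elementary_smooth.const elementary_smooth.add)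

lemma elementary_smooth_power: "f \<in> elementary_smooth \<Longrightarrow> (\<lambda>x. f x ^ n) \<in> elementary_smooth"
  by (induction n) (auto intro: elementary_smooth.const elementary_smooth.mult)

section \<open>Monomials and cut-offs\<close>

definition monomial :: "('N::finite \<Rightarrow> nat) \<Rightarrow> real^'N \<Rightarrow> real" where
  "monomial \<gamma> x = (\<Prod>j\<in>UNIV. x $ j ^ \<gamma> j)"

lemma monomial_elementary_smooth: "monomial \<gamma> \<in> elementary_smooth"
proof -
  have "(\<lambda>x. \<Prod>j\<in>UNIV. x $ j ^ \<gamma> j) \<in> elementary_smooth"
    by (intro elementary_smooth_prod elementary_smooth_power elementary_smooth.coord) auto
  then show ?thesis
    by (simp add: monomial_def[abs_def])
qed

lemma partial_dir_monomial: "partial_dir i (monomial \<gamma>) x = real (\<gamma> i) * monomial (\<gamma>(i := \<gamma> i - 1)) x"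
proof -
  have "(monomial \<gamma> has_derivative
      (\<lambda>y. \<Sum>j\<in>UNIV. (real (\<gamma> j) * y $ j * x $ j ^ (\<gamma> j - 1)) * (\<Prod>k\<in>UNIV - {j}. x $ k ^ \<gamma> k))) (at x)"
    unfolding monomial_def[abs_def]
    by (rule has_derivative_prod[OF has_derivative_power[OF bounded_linear_imp_has_derivative[OF bounded_linear_vec_nth]]])
  then have "partial_dir i (monomial \<gamma>) x =
      (\<Sum>j\<in>UNIV. (real (\<gamma> j) * axis i 1 $ j * x $ j ^ (\<gamma> j - 1)) * (\<Prod>k\<in>UNIV - {j}. x $ k ^ \<gamma> k))"
    by (rule partial_dir_eq_derivative)
  also have "\<dots> = (\<Sum>j\<in>UNIV. if j = i then real (\<gamma> i) * x $ i ^ (\<gamma> i - 1) * (\<Prod>k\<in>UNIV - {i}. x $ k ^ \<gamma> k) else 0)"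
    by (rule sum.cong) (auto simp: axis_def)
  also have "\<dots> = real (\<gamma> i) * x $ i ^ (\<gamma> i - 1) * (\<Prod>k\<in>UNIV - {i}. x $ k ^ \<gamma> k)"
    by simp
  finally have "partial_dir i (monomial \<gamma>) x = real (\<gamma> i) * x $ i ^ (\<gamma> i - 1) * (\<Prod>k\<in>UNIV - {i}. x $ k ^ \<gamma> k)" .
  moreover have "(\<Prod>k\<in>UNIV - {i}. x $ k ^ (\<gamma>(i := \<gamma> i - 1)) k) = (\<Prod>k\<in>UNIV - {i}. x $ k ^ \<gamma> k)"
    by (rule prod.cong) auto
  then have "monomial (\<gamma>(i := \<gamma> i - 1)) x = x $ i ^ (\<gamma> i - 1) * (\<Prod>k\<in>UNIV - {i}. x $ k ^ \<gamma> k)"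
    unfolding monomial_def using prod.remove[of UNIV i "\<lambda>j. x $ j ^ (\<gamma>(i := \<gamma> i - 1)) j"] by simp
  ultimately show ?thesis
    by (simp add: mult.assoc)
qed

text \<open>The coefficient \<open>\<Prod>k<n. real (\<gamma> i - k)\<close> is a falling factorial; through the
  truncated subtraction it vanishes as soon as \<open>n > \<gamma> i\<close>.\<close>

lemma partials_monomial:
  "partials js (monomial \<gamma>) =
    (\<lambda>x. (\<Prod>i\<in>UNIV. \<Prod>k<count_list js i. real (\<gamma> i - k)) * monomial (\<lambda>i. \<gamma> i - count_list js i) x)"
proof (induction js)
  case (Cons j js)
  let ?K = "\<Prod>i\<in>UNIV. \<Prod>k<count_list js i. real (\<gamma> i - k)"
  let ?d = "\<lambda>i. \<gamma> i - count_list js i"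
  have "partials (j # js) (monomial \<gamma>) = partial_dir j (\<lambda>x. ?K * monomial ?d x)"
    using Cons.IH by simp
  also have "\<dots> = (\<lambda>x. ?K * real (?d j) * monomial (?d(j := ?d j - 1)) x)"
    by (simp add: fun_eq_iff partial_dir_cmult partial_dir_monomial mult.assoc
        elementary_smooth_differentiable monomial_elementary_smooth)
  also have "?d(j := ?d j - 1) = (\<lambda>i. \<gamma> i - count_list (j # js) i)"
    by (auto simp: fun_eq_iff)
  also have "?K * real (?d j) = (\<Prod>i\<in>UNIV. \<Prod>k<count_list (j # js) i. real (\<gamma> i - k))"
    by (rule prod_count_list_Cons[symmetric]) simp
  finally show ?case .
qed simp

lemma mpartial_monomial:
  "mpartial \<beta> (monomial \<alpha>) x = (\<Prod>i\<in>UNIV. \<Prod>k<\<beta> i. real (\<alpha> i - k)) * monomial (\<lambda>i. \<alpha> i - \<beta> i) x"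
  by (simp add: mpartial_def partials_monomial count_list_mpartial)

lemma aidx_eq_if_le:
  assumes a: "\<forall>j. a j \<ge> 1" and \<alpha>: "\<alpha> \<in> aidx a" and \<beta>: "\<beta> \<in> aidx a" and le: "\<forall>j. \<beta> j \<le> \<alpha> j"
  shows "\<alpha> = \<beta>"
proof
  fix j
  have "(\<Sum>j\<in>UNIV. (real (\<alpha> j) - real (\<beta> j)) / real (a j)) = 0"
    using \<alpha> \<beta> by (simp add: aidx_def diff_divide_distrib sum_subtractf)
  moreover have "\<forall>j\<in>UNIV. 0 \<le> (real (\<alpha> j) - real (\<beta> j)) / real (a j)"
    using le by auto
  ultimately have "(real (\<alpha> j) - real (\<beta> j)) / real (a j) = 0"
    by (simp add: sum_nonneg_eq_0_iff)
  moreover have "real (a j) \<noteq> 0"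
    using a by (simp add: Suc_le_eq)
  ultimately show "\<alpha> j = \<beta> j"
    by simp
qed

lemma mpartial_monomial_aidx:
  assumes "\<forall>j. a j \<ge> 1" "\<alpha> \<in> aidx a" "\<beta> \<in> aidx a"
  shows "mpartial \<beta> (monomial \<alpha>) x = (if \<alpha> = \<beta> then \<Prod>i\<in>UNIV. fact (\<alpha> i) else 0)"
proof (cases "\<alpha> = \<beta>")
  case True
  have "(\<Prod>k<n. real (n - k)) = fact n" for n
    by (simp add: fact_prod_rev lessThan_atLeast0)
  then show ?thesis
    using True by (simp add: mpartial_monomial monomial_def)
next
  case False
  then obtain i where "\<alpha> i < \<beta> i"
    using aidx_eq_if_le[OF assms] by (meson not_le)
  then have "(\<Prod>k<\<beta> i. real (\<alpha> i - k)) = 0"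
    by (intro prod_zero) auto
  then have "(\<Prod>i\<in>UNIV. \<Prod>k<\<beta> i. real (\<alpha> i - k)) = 0"
    by (intro prod_zero) auto
  then show ?thesis
    using False by (simp add: mpartial_monomial)
qed

definition bump :: "real \<Rightarrow> real" where
  "bump t = flat_exp 0 (3/4 - t) * flat_exp 0 (3/4 + t)"

definition antibump :: "real \<Rightarrow> real" where
  "antibump t = flat_exp 0 (t - 1/2) + flat_exp 0 (- t - 1/2)"

definition cutoff :: "real^'N::finite \<Rightarrow> real" where
  "cutoff x = (\<Prod>i\<in>UNIV. bump (x $ i) / (bump (x $ i) + antibump (x $ i)))"

lemma bump_pos: "\<bar>t\<bar> < 3/4 \<Longrightarrow> bump t > 0"
  and bump_eq_0: "\<bar>t\<bar> \<ge> 3/4 \<Longrightarrow> bump t = 0"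
  and antibump_pos: "\<bar>t\<bar> > 1/2 \<Longrightarrow> antibump t > 0"
  and antibump_eq_0: "\<bar>t\<bar> \<le> 1/2 \<Longrightarrow> antibump t = 0"
  by (auto simp: bump_def antibump_def flat_exp_def add_pos_nonneg add_nonneg_pos)

lemma bump_plus_antibump_pos: "bump t + antibump t > 0"
proof -
  have "bump t \<ge> 0" "antibump t \<ge> 0"
    by (simp_all add: bump_def antibump_def flat_exp_def)
  then show ?thesis
    using bump_pos[of t] antibump_pos[of t] by (cases "\<bar>t\<bar> < 3/4") auto
qed

lemma cutoff_elementary_smooth: "cutoff \<in> elementary_smooth"
proof -
  have flat: "(\<lambda>x::real^'N. flat_exp 0 (c + d * x $ i)) \<in> elementary_smooth" for c d i
    by (rule elementary_smooth.flat_exp)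
  have "(\<lambda>x::real^'N. bump (x $ i)) \<in> elementary_smooth" for i
    using elementary_smooth.mult[OF flat[of "3/4" "-1" i] flat[of "3/4" 1 i]] by (simp add: bump_def)
  moreover have "(\<lambda>x::real^'N. antibump (x $ i)) \<in> elementary_smooth" for i
    using elementary_smooth.add[OF flat[of "-1/2" 1 i] flat[of "-1/2" "-1" i]]
    by (simp add: antibump_def algebra_simps)
  ultimately have "(\<lambda>x::real^'N. \<Prod>i\<in>UNIV. bump (x $ i) * inverse (bump (x $ i) + antibump (x $ i)))
      \<in> elementary_smooth"
    using bump_plus_antibump_pos
    by (intro elementary_smooth_prod elementary_smooth.mult elementary_smooth.inverse elementary_smooth.add)
      (auto simp: less_imp_neq[symmetric])
  then show ?thesis
    by (simp add: cutoff_def[abs_def] divide_inverse)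
qed

lemma cutoff_eq_1:
  assumes "x \<in> box (- (\<chi> i. 1/2)) (\<chi> i. 1/2)"
  shows "cutoff x = 1"
proof -
  have "- (1/2) < x $ i \<and> x $ i < 1/2" for i
    using assms by (simp add: mem_box_cart)
  then have small: "\<bar>x $ i\<bar> < 1/2" for i
    by (metis abs_less_iff minus_less_iff)
  have "bump (x $ i) > 0" "antibump (x $ i) = 0" for i
    using small[of i] by (auto intro!: bump_pos antibump_eq_0)
  then have "bump (x $ i) / (bump (x $ i) + antibump (x $ i)) = 1" for i
    by (metis add_0_right div_self less_irrefl)
  then show ?thesis
    unfolding cutoff_def by (intro prod.neutral) blast
qed

lemma cutoff_nonzero_imp_mem_cbox:
  assumes "cutoff x \<noteq> 0"
  shows "x \<in> cbox (- (\<chi> i. 3/4)) (\<chi> i. 3/4)"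
proof -
  have "bump (x $ i) \<noteq> 0" for i
    using assms by (auto simp: cutoff_def)
  then have "\<bar>x $ i\<bar> < 3/4" for i
    using bump_eq_0 not_le by blast
  then have "- (3/4) \<le> x $ i \<and> x $ i \<le> 3/4" for i
    by (metis abs_le_iff less_imp_le minus_le_iff)
  then show ?thesis
    by (simp add: mem_box_cart)
qed

section \<open>Anisotropic rescaling\<close>

definition stretch_box :: "('N::finite \<Rightarrow> real) \<Rightarrow> (real^'N) set" where
  "stretch_box c = box (- (\<chi> j. 1 / c j)) (\<chi> j. 1 / c j)"

lemma stretch_in_cubeQ_iff:
  assumes "\<forall>j. c j > 0"
  shows "stretch c x \<in> cubeQ \<longleftrightarrow> x \<in> stretch_box c"
proof -
  have "(- 1 < c j * x $ j \<and> c j * x $ j < 1) \<longleftrightarrow> (- (1 / c j) < x $ j \<and> x $ j < 1 / c j)" for j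
  proof -
    have "c j > 0"
      using assms by blast
    then show ?thesis
      by (simp add: field_simps)
  qed
  then show ?thesis
    by (simp add: cubeQ_def stretch_box_def stretch_def mem_box_cart)
qed

lemma closure_support_stretch_subset:
  assumes c: "\<forall>j. c j > 0" and u: "u \<in> Cc_inf"
  shows "closure {x. u (stretch c x) \<noteq> 0} \<subseteq> stretch_box c"
proof -
  have "closed (stretch c -` closure {y. u y \<noteq> 0})"
    by (intro continuous_closed_vimage closed_closure linear_continuous_at bounded_linear_stretch)
  moreover have "{x. u (stretch c x) \<noteq> 0} \<subseteq> stretch c -` closure {y. u y \<noteq> 0}"
    using closure_subset[of "{y. u y \<noteq> 0}"] by auto
  ultimately have "closure {x. u (stretch c x) \<noteq> 0} \<subseteq> stretch c -` closure {y. u y \<noteq> 0}"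
    by (rule closure_minimal[rotated])
  also have "\<dots> \<subseteq> stretch_box c"
  proof
    fix x
    assume "x \<in> stretch c -` closure {y. u y \<noteq> 0}"
    then have "stretch c x \<in> cubeQ"
      using u by (auto simp: Cc_inf_def)
    then show "x \<in> stretch_box c"
      using stretch_in_cubeQ_iff[OF c] by blast
  qed
  finally show ?thesis .
qed

lemma stretch_box_subset_half_box:
  assumes "\<forall>j. c j \<ge> 2"
  shows "stretch_box c \<subseteq> box (- (\<chi> i. 1/2)) (\<chi> i. 1/2)"
proof
  fix x
  assume "x \<in> stretch_box c"
  then have "- (1 / c j) < x $ j \<and> x $ j < 1 / c j" for j
    by (simp add: stretch_box_def mem_box_cart)
  moreover have "1 / c j \<le> 1/2" for j
    using assms le_imp_inverse_le[of 2 "c j"] by (simp add: inverse_eq_divide)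
  ultimately have "- (1/2) < x $ j \<and> x $ j < 1/2" for j
    by (smt (verit))
  then show "x \<in> box (- (\<chi> i. 1/2)) (\<chi> i. 1/2)"
    by (simp add: mem_box_cart)
qed

lemma half_box_subset_cbox_three_quarters:
  "box (- (\<chi> i. 1/2)) (\<chi> i. 1/2) \<subseteq> (cbox (- (\<chi> i. 3/4)) (\<chi> i. 3/4) :: (real^'N::finite) set)"
proof
  fix x :: "real^'N"
  assume x: "x \<in> box (- (\<chi> i. 1/2)) (\<chi> i. 1/2)"
  have "- (3/4) \<le> x $ i \<and> x $ i \<le> 3/4" for i
    using x[unfolded mem_box_cart, rule_format, of i] by simp
  then show "x \<in> cbox (- (\<chi> i. 3/4)) (\<chi> i. 3/4)"
    by (simp add: mem_box_cart)
qed
lemma cbox_three_quarters_subset_cubeQ: "cbox (- (\<chi> i. 3/4)) (\<chi> i. 3/4) \<subseteq> (cubeQ :: (real^'N::finite) set)"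
proof
  fix x :: "real^'N"
  assume x: "x \<in> cbox (- (\<chi> i. 3/4)) (\<chi> i. 3/4)"
  have "- 1 < x $ i \<and> x $ i < 1" for i
    using x[unfolded mem_box_cart, rule_format, of i] by simp
  then show "x \<in> cubeQ"
    by (simp add: cubeQ_def mem_box_cart)
qed

lemma cubeQ_subset_cbox: "(cubeQ :: (real^'N::finite) set) \<subseteq> cbox (-1) 1"
  by (simp add: cubeQ_def box_subset_cbox)

lemma has_integral_stretch_box:
  fixes c :: "'N::finite \<Rightarrow> real" and g :: "real^'N \<Rightarrow> real"
  assumes c: "\<forall>j. c j > 0" and g: "g integrable_on cbox (-1) 1"
  shows "((\<lambda>x. g (stretch c x)) has_integral integral (cbox (-1) 1) g / (\<Prod>j\<in>UNIV. c j)) (stretch_box c)"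
proof -
  have inverse: "(\<lambda>x::real^'N. \<chi> k. x $ k / c k) = (\<lambda>x. \<chi> k. inverse (c k) * x $ k)"
    by (simp add: fun_eq_iff vec_eq_iff divide_inverse mult.commute)
  have "cbox (-1) (1::real^'N) \<noteq> {}"
    by (auto simp: box_ne_empty inner_axis Basis_vec_def)
  moreover have "min (inverse (c k) * (-1::real^'N) $ k) (inverse (c k) * (1::real^'N) $ k) = - (1 / c k)"
    and "max (inverse (c k) * (-1::real^'N) $ k) (inverse (c k) * (1::real^'N) $ k) = 1 / c k" for k
    using c[rule_format, of k] by (simp_all add: inverse_eq_divide)
  moreover have "- (\<chi> j. 1 / c j) = (\<chi> j. - (1 / c j) :: real^'N)"
    by (simp add: vec_eq_iff)
  ultimately have image: "(\<lambda>x. \<chi> k. x $ k / c k) ` cbox (-1) (1::real^'N) = cbox (- (\<chi> j. 1 / c j)) (\<chi> j. 1 / c j)"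
    unfolding inverse using image_stretch_interval_cart[of "\<lambda>k. inverse (c k)" "-1" "1::real^'N"] by simp
  have "((\<lambda>x. g (stretch c x)) has_integral integral (cbox (-1) 1) g /\<^sub>R \<bar>prod c UNIV\<bar>)
      (cbox (- (\<chi> j. 1 / c j)) (\<chi> j. 1 / c j))"
    using has_integral_stretch_cart[OF integrable_integral[OF g], of c] c image
    unfolding stretch_def by (simp add: less_imp_neq[symmetric])
  moreover have "prod c UNIV > 0"
    using c by (simp add: prod_pos)
  ultimately show ?thesis
    unfolding stretch_box_def has_integral_open_interval by (simp add: divide_inverse mult.commute)
qed

text \<open>The rescaling \<open>u \<mapsto> t * u (stretch c x)\<close> multiplies \<open>\<partial>\<^sup>\<alpha> u\<close> by \<open>t * (\<Prod>j. c j ^ \<alpha> j)\<close>;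
  with the following choices this factor is \<open>1\<close> on the whole hyperplane
  \<open>\<langle>\<alpha>, a\<^sup>-\<^sup>1\<rangle> = 1\<close>, while all \<open>c j \<ge> 2\<close>.\<close>

definition anis_scale :: "('N::finite \<Rightarrow> nat) \<Rightarrow> 'N \<Rightarrow> real" where
  "anis_scale a j = 2 powr ((\<Sum>i\<in>UNIV. real (a i)) / real (a j))"

definition anis_amplitude :: "('N::finite \<Rightarrow> nat) \<Rightarrow> real" where
  "anis_amplitude a = 2 powr (- (\<Sum>i\<in>UNIV. real (a i)))"

lemma anis_amplitude_times_prod_anis_scale:
  assumes "\<alpha> \<in> aidx a"
  shows "anis_amplitude a * (\<Prod>j\<in>UNIV. anis_scale a j ^ \<alpha> j) = 1"
proof -
  let ?S = "\<Sum>i\<in>UNIV. real (a i)"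
  have "(\<Prod>j\<in>UNIV. anis_scale a j ^ \<alpha> j) = (\<Prod>j\<in>UNIV. 2 powr (?S / real (a j) * real (\<alpha> j)))"
    by (simp add: anis_scale_def powr_realpow[symmetric] powr_powr)
  also have "\<dots> = 2 powr (?S * (\<Sum>j\<in>UNIV. real (\<alpha> j) / real (a j)))"
    by (simp add: powr_sum sum_distrib_left)
  also have "\<dots> = 2 powr ?S"
    using assms by (simp add: aidx_def)
  finally show ?thesis
    by (simp add: anis_amplitude_def powr_add[symmetric])
qed

lemma anis_scale_pos: "anis_scale a j > 0"
  by (simp add: anis_scale_def)

lemma anis_scale_ge_2:
  assumes "a j \<ge> 1"
  shows "anis_scale a j \<ge> 2"
proof -
  have "real (a j) \<le> (\<Sum>i\<in>UNIV. real (a i))"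
    by (rule member_le_sum) auto
  then have "1 \<le> (\<Sum>i\<in>UNIV. real (a i)) / real (a j)"
    using assms by simp
  then show ?thesis
    using powr_mono[of 1 _ 2] by (simp add: anis_scale_def)
qed

lemma anis_stretch_box_subset_half_box:
  "\<forall>j. a j \<ge> 1 \<Longrightarrow> stretch_box (anis_scale a) \<subseteq> box (- (\<chi> i. 1/2)) (\<chi> i. 1/2)"
  by (simp add: anis_scale_ge_2 stretch_box_subset_half_box)

section \<open>Transferring competitors\<close>

definition cutoff_monomial :: "('m \<Rightarrow> ('N::finite \<Rightarrow> nat)) \<Rightarrow> 'm \<Rightarrow> real^'N \<Rightarrow> real" where
  "cutoff_monomial idx l x = cutoff x * monomial (idx l) x / (\<Prod>j\<in>UNIV. fact (idx l j))"

lemma cutoff_monomial_elementary_smooth: "cutoff_monomial idx l \<in> elementary_smooth"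
proof -
  have "(\<lambda>x. cutoff x * monomial (idx l) x * inverse (\<Prod>j\<in>UNIV. fact (idx l j))) \<in> elementary_smooth"
    by (intro elementary_smooth.mult elementary_smooth.const cutoff_elementary_smooth monomial_elementary_smooth)
  then show ?thesis
    by (simp add: cutoff_monomial_def[abs_def] divide_inverse)
qed

lemma mpartial_cutoff_monomial:
  fixes idx :: "'m \<Rightarrow> ('N::finite \<Rightarrow> nat)"
  assumes a: "\<forall>j. a j \<ge> 1" and idx: "bij_betw idx UNIV (aidx a)"
    and x: "x \<in> box (- (\<chi> i. 1/2)) (\<chi> i. 1/2)"
  shows "mpartial (idx k) (cutoff_monomial idx l) x = (if l = k then 1 else 0)"
proof -
  let ?P = "\<Prod>j\<in>UNIV. fact (idx l j) :: real"
  have "mpartial (idx k) (cutoff_monomial idx l) x = mpartial (idx k) (\<lambda>y. inverse ?P * monomial (idx l) y) x"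
    unfolding mpartial_def
  proof (rule partials_cong_open[OF open_box x])
    fix y :: "real^'N"
    assume "y \<in> box (- (\<chi> i. 1/2)) (\<chi> i. 1/2)"
    then have "cutoff y = 1"
      by (rule cutoff_eq_1)
    then show "cutoff_monomial idx l y = inverse ?P * monomial (idx l) y"
      by (simp add: cutoff_monomial_def divide_inverse mult.commute)
  qed
  also have "\<dots> = inverse ?P * mpartial (idx k) (monomial (idx l)) x"
    by (simp add: mpartial_def partials_cmult elementary_smooth_smooth_fun monomial_elementary_smooth)
  also have "\<dots> = (if l = k then 1 else 0)"
    using mpartial_monomial_aidx[OF a bij_betw_apply[OF idx UNIV_I] bij_betw_apply[OF idx UNIV_I]]
      inj_eq[OF bij_betw_imp_inj_on[OF idx]] by simp
  finally show ?thesis .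
qed

text \<open>From a competitor \<open>u\<close> at \<open>X0 + Y\<close>, a competitor at \<open>X0\<close>: \<open>u\<close> rescaled into
  \<open>stretch_box (anis_scale a)\<close> without changing its anisotropic gradient, plus a corrector whose
  anisotropic gradient equals \<open>Y\<close> wherever the cut-off is \<open>1\<close>.\<close>

definition transfer_competitor :: "('N::finite \<Rightarrow> nat) \<Rightarrow> ('m::finite \<Rightarrow> ('N \<Rightarrow> nat)) \<Rightarrow> real^'m^'n
    \<Rightarrow> (real^'N \<Rightarrow> real^'n::finite) \<Rightarrow> real^'N \<Rightarrow> real^'n" where
  "transfer_competitor a idx Y u x =
    anis_amplitude a *\<^sub>R u (stretch (anis_scale a) x) + (\<chi> i. \<Sum>l\<in>UNIV. Y $ i $ l * cutoff_monomial idx l x)"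

lemma transfer_competitor_component:
  "(\<lambda>x. transfer_competitor a idx Y u x $ i) =
    (\<lambda>x. anis_amplitude a * u (stretch (anis_scale a) x) $ i + (\<Sum>l\<in>UNIV. Y $ i $ l * cutoff_monomial idx l x))"
  by (simp add: transfer_competitor_def fun_eq_iff)

lemma smooth_fun_Cc_inf: "u \<in> Cc_inf \<Longrightarrow> smooth_fun (\<lambda>x. u x $ i)"
  by (simp add: Cc_inf_def)

lemma smooth_fun_amplitude_stretch:
  "u \<in> Cc_inf \<Longrightarrow> smooth_fun (\<lambda>x. t * u (stretch c x) $ i)"
  using smooth_fun_cmult[OF smooth_fun_stretch[OF smooth_fun_Cc_inf]] by blast

lemma elementary_smooth_corrector:
  "(\<lambda>x. \<Sum>l\<in>UNIV. Y $ i $ l * cutoff_monomial idx l x) \<in> elementary_smooth"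
  by (intro elementary_smooth_sum elementary_smooth.mult elementary_smooth.const cutoff_monomial_elementary_smooth) auto

lemma transfer_competitor_Cc_inf:
  assumes a: "\<forall>j. a j \<ge> 1" and u: "u \<in> Cc_inf"
  shows "transfer_competitor a idx Y u \<in> Cc_inf"
proof -
  let ?Q34 = "cbox (- (\<chi> i. 3/4)) (\<chi> i. 3/4) :: (real^'a) set"
  let ?S = "closure {x. u (stretch (anis_scale a) x) \<noteq> 0} \<union> ?Q34"
  have "{x. transfer_competitor a idx Y u x \<noteq> 0} \<subseteq> ?S"
  proof
    fix x
    assume x: "x \<in> {x. transfer_competitor a idx Y u x \<noteq> 0}"
    show "x \<in> ?S"
    proof (cases "u (stretch (anis_scale a) x) = 0")
      case True
      with x obtain i where "(\<Sum>l\<in>UNIV. Y $ i $ l * cutoff_monomial idx l x) \<noteq> 0"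
        by (auto simp: transfer_competitor_def vec_eq_iff)
      then obtain l where "cutoff_monomial idx l x \<noteq> 0"
        by (metis (no_types, lifting) mult_zero_right sum.neutral)
      then have "cutoff x \<noteq> 0"
        by (simp add: cutoff_monomial_def)
      then show ?thesis
        using cutoff_nonzero_imp_mem_cbox by blast
    next
      case False
      then show ?thesis
        using closure_subset[of "{x. u (stretch (anis_scale a) x) \<noteq> 0}"] by blast
    qed
  qed
  then have "closure {x. transfer_competitor a idx Y u x \<noteq> 0} \<subseteq> ?S"
    by (rule closure_minimal) auto
  also have "\<dots> \<subseteq> ?Q34"
    using order_trans[OF order_trans[OF closure_support_stretch_subset[OF _ u]
          anis_stretch_box_subset_half_box[OF a]] half_box_subset_cbox_three_quarters]
    by (simp add: anis_scale_pos)
  also have "\<dots> \<subseteq> cubeQ"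
    by (rule cbox_three_quarters_subset_cubeQ)
  moreover have "smooth_fun (\<lambda>x. transfer_competitor a idx Y u x $ i)" for i
    unfolding transfer_competitor_component
    by (rule smooth_fun_add[OF smooth_fun_amplitude_stretch[OF u]
          elementary_smooth_smooth_fun[OF elementary_smooth_corrector]])
  ultimately show ?thesis
    unfolding Cc_inf_def by blast
qed

lemma mpartial_transfer_competitor:
  assumes u: "u \<in> Cc_inf"
  shows "mpartial \<beta> (\<lambda>x. transfer_competitor a idx Y u x $ i) x =
    mpartial \<beta> (\<lambda>x. anis_amplitude a * u (stretch (anis_scale a) x) $ i) x +
    (\<Sum>l\<in>UNIV. Y $ i $ l * mpartial \<beta> (cutoff_monomial idx l) x)"
proof -
  let ?js = "SOME js. \<forall>j. count_list js j = \<beta> j"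
  have smooth: "smooth_fun (cutoff_monomial idx l)" for l
    by (rule elementary_smooth_smooth_fun[OF cutoff_monomial_elementary_smooth])
  have "partials ?js (\<lambda>x. \<Sum>l\<in>UNIV. Y $ i $ l * cutoff_monomial idx l x) =
      (\<lambda>x. \<Sum>l\<in>UNIV. Y $ i $ l * partials ?js (cutoff_monomial idx l) x)"
    using partials_sum[of UNIV "\<lambda>l x. Y $ i $ l * cutoff_monomial idx l x"]
      partials_cmult[OF smooth] smooth_fun_cmult[OF smooth] by simp
  moreover have "partials ?js (\<lambda>x. anis_amplitude a * u (stretch (anis_scale a) x) $ i +
        (\<Sum>l\<in>UNIV. Y $ i $ l * cutoff_monomial idx l x)) =
      (\<lambda>x. partials ?js (\<lambda>x. anis_amplitude a * u (stretch (anis_scale a) x) $ i) x +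
        partials ?js (\<lambda>x. \<Sum>l\<in>UNIV. Y $ i $ l * cutoff_monomial idx l x) x)"
    by (rule partials_add[OF smooth_fun_amplitude_stretch[OF u]
          elementary_smooth_smooth_fun[OF elementary_smooth_corrector]])
  ultimately show ?thesis
    unfolding mpartial_def transfer_competitor_component by simp
qed

lemma grad_a_transfer_competitor_inside:
  assumes a: "\<forall>j. a j \<ge> 1" and idx: "bij_betw idx UNIV (aidx a)" and u: "u \<in> Cc_inf"
    and x: "x \<in> stretch_box (anis_scale a)"
  shows "grad_a idx (transfer_competitor a idx Y u) x = grad_a idx u (stretch (anis_scale a) x) + Y"
proof -
  have x': "x \<in> box (- (\<chi> i. 1/2)) (\<chi> i. 1/2)"
    using anis_stretch_box_subset_half_box[OF a] x by blast
  have "mpartial (idx k) (\<lambda>x. anis_amplitude a * u (stretch (anis_scale a) x) $ i) x =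
      anis_amplitude a * mpartial (idx k) (\<lambda>x. u (stretch (anis_scale a) x) $ i) x" for i k
    unfolding mpartial_def using partials_cmult[OF smooth_fun_stretch[OF smooth_fun_Cc_inf[OF u]]] by simp
  also have "\<dots> i k = anis_amplitude a * (\<Prod>j\<in>UNIV. anis_scale a j ^ idx k j) *
      mpartial (idx k) (\<lambda>x. u x $ i) (stretch (anis_scale a) x)" for i k
    using mpartial_stretch[OF smooth_fun_Cc_inf[OF u]] by simp
  also have "\<dots> i k = mpartial (idx k) (\<lambda>x. u x $ i) (stretch (anis_scale a) x)" for i k
    using anis_amplitude_times_prod_anis_scale[OF bij_betw_apply[OF idx UNIV_I]] by simp
  finally have amplitude: "mpartial (idx k) (\<lambda>x. anis_amplitude a * u (stretch (anis_scale a) x) $ i) x =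
      mpartial (idx k) (\<lambda>x. u x $ i) (stretch (anis_scale a) x)" for i k .
  have "(\<Sum>l\<in>UNIV. Y $ i $ l * mpartial (idx k) (cutoff_monomial idx l) x) = (\<Sum>l\<in>UNIV. if l = k then Y $ i $ l else 0)" for i k
    by (rule sum.cong) (simp_all add: mpartial_cutoff_monomial[OF a idx x'])
  then have corrector: "(\<Sum>l\<in>UNIV. Y $ i $ l * mpartial (idx k) (cutoff_monomial idx l) x) = Y $ i $ k" for i k
    by simp
  show ?thesis
    by (simp add: grad_a_def vec_eq_iff mpartial_transfer_competitor[OF u] amplitude corrector)
qed

lemma grad_a_transfer_competitor_outside:
  assumes u: "u \<in> Cc_inf" and x: "x \<notin> stretch_box (anis_scale a)"
  shows "grad_a idx (transfer_competitor a idx Y u) x =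
    (\<chi> i k. \<Sum>l\<in>UNIV. Y $ i $ l * mpartial (idx k) (cutoff_monomial idx l) x)"
proof -
  let ?S = "{x. u (stretch (anis_scale a) x) \<noteq> 0}"
  have "x \<in> - closure ?S"
    using closure_support_stretch_subset[OF _ u] anis_scale_pos x by blast
  then have "mpartial \<beta> (\<lambda>x. anis_amplitude a * u (stretch (anis_scale a) x) $ i) x = mpartial \<beta> (\<lambda>x. 0) x" for \<beta> i
    unfolding mpartial_def
  proof (rule partials_cong_open[OF open_Compl[OF closed_closure]])
    fix y
    assume "y \<in> - closure ?S"
    then have "u (stretch (anis_scale a) y) = 0"
      using closure_subset[of ?S] by blast
    then show "anis_amplitude a * u (stretch (anis_scale a) y) $ i = 0"
      by simp
  qed
  then show ?thesis
    by (simp add: grad_a_def vec_eq_iff mpartial_transfer_competitor[OF u])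
qed

lemma bounded_mpartial_cutoff_monomial:
  fixes idx :: "'m::finite \<Rightarrow> ('N::finite \<Rightarrow> nat)"
  obtains B where "B \<ge> 0"
    "\<And>x k l. x \<in> cbox (-1) 1 \<Longrightarrow> \<bar>mpartial (idx k) (cutoff_monomial idx l) x\<bar> \<le> B"
proof -
  let ?G = "\<lambda>x. \<Sum>k\<in>UNIV. \<Sum>l\<in>UNIV. \<bar>mpartial (idx k) (cutoff_monomial idx l) x\<bar>"
  have "continuous_on (cbox (-1) 1) ?G"
    unfolding mpartial_def
    by (intro continuous_intros elementary_smooth_continuous_on elementary_smooth_partials
        cutoff_monomial_elementary_smooth)
  then have "compact (?G ` cbox (-1) 1)"
    by (rule compact_continuous_image[OF _ compact_cbox])
  then obtain B where B: "\<forall>y\<in>?G ` cbox (-1) 1. norm y \<le> B"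
    using compact_imp_bounded bounded_iff by metis
  show ?thesis
  proof (rule that)
    show "0 \<le> \<bar>B\<bar>"
      by simp
    fix x k l
    assume x: "x \<in> cbox (-1) (1::real^'N)"
    have "\<bar>mpartial (idx k) (cutoff_monomial idx l) x\<bar> \<le> (\<Sum>l\<in>UNIV. \<bar>mpartial (idx k) (cutoff_monomial idx l) x\<bar>)"
      by (rule member_le_sum) auto
    also have "\<dots> \<le> ?G x"
      by (rule member_le_sum[where f = "\<lambda>k. \<Sum>l\<in>UNIV. \<bar>mpartial (idx k) (cutoff_monomial idx l) x\<bar>"])
        (auto intro: sum_nonneg)
    also have "?G x \<le> B"
      using B x by fastforce
    finally show "\<bar>mpartial (idx k) (cutoff_monomial idx l) x\<bar> \<le> \<bar>B\<bar>"
      by simp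
  qed
qed

lemma norm_vec_le_sum_norm: "norm (x :: 'a::real_normed_vector^'n::finite) \<le> (\<Sum>i\<in>UNIV. norm (x $ i))"
  unfolding norm_vec_def by (rule L2_set_le_sum) simp

lemma norm_mult_bounded_entries_le:
  fixes Y :: "real^'m::finite^'n::finite" and P :: "'m \<Rightarrow> 'm \<Rightarrow> real"
  assumes P: "\<And>k l. \<bar>P k l\<bar> \<le> B"
  shows "norm (\<chi> i k. \<Sum>l\<in>UNIV. Y $ i $ l * P k l) \<le> real (CARD('n) * CARD('m) * CARD('m)) * B * norm Y"
proof -
  let ?M = "(\<chi> i k. \<Sum>l\<in>UNIV. Y $ i $ l * P k l) :: real^'m^'n"
  have entry: "\<bar>Y $ i $ l * P k l\<bar> \<le> B * norm Y" for i l k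
  proof -
    have "\<bar>Y $ i $ l\<bar> \<le> norm Y"
      using component_le_norm_cart[of "Y $ i" l] Finite_Cartesian_Product.norm_nth_le[of Y i] by linarith
    then have "\<bar>Y $ i $ l\<bar> * \<bar>P k l\<bar> \<le> norm Y * B"
      by (rule mult_mono) (use P in auto)
    then show ?thesis
      by (simp add: abs_mult mult.commute)
  qed
  have sum: "\<bar>\<Sum>l\<in>UNIV. Y $ i $ l * P k l\<bar> \<le> real CARD('m) * (B * norm Y)" for i k
  proof -
    have "\<bar>\<Sum>l\<in>UNIV. Y $ i $ l * P k l\<bar> \<le> (\<Sum>l\<in>UNIV. \<bar>Y $ i $ l * P k l\<bar>)"
      by (rule sum_abs)
    also have "\<dots> \<le> (\<Sum>l\<in>(UNIV::'m set). B * norm Y)"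
      by (intro sum_mono entry)
    finally show ?thesis
      by simp
  qed
  have "norm ?M \<le> (\<Sum>i\<in>UNIV. norm (?M $ i))"
    by (rule norm_vec_le_sum_norm)
  also have "\<dots> \<le> (\<Sum>i\<in>(UNIV::'n set). real CARD('m) * (real CARD('m) * (B * norm Y)))"
  proof (rule sum_mono)
    fix i
    have "norm (?M $ i) \<le> (\<Sum>k\<in>UNIV. \<bar>?M $ i $ k\<bar>)"
      by (rule norm_le_l1_cart)
    also have "\<dots> \<le> (\<Sum>k\<in>(UNIV::'m set). real CARD('m) * (B * norm Y))"
      by (rule sum_mono) (simp add: sum)
    finally show "norm (?M $ i) \<le> real CARD('m) * (real CARD('m) * (B * norm Y))"
      by simp
  qed
  finally show ?thesis
    by (simp add: algebra_simps)
qed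

lemma norm_grad_a_transfer_competitor_outside_le:
  fixes idx :: "'m::finite \<Rightarrow> ('N::finite \<Rightarrow> nat)"
  obtains K where "K \<ge> 0"
    "\<And>Y u x. u \<in> Cc_inf \<Longrightarrow> x \<in> cbox (-1) 1 \<Longrightarrow> x \<notin> stretch_box (anis_scale a) \<Longrightarrow>
      norm (grad_a idx (transfer_competitor a idx Y u) x) \<le> K * norm (Y :: real^'m^'n::finite)"
proof -
  obtain B where "B \<ge> 0" and B: "\<And>x k l. x \<in> cbox (-1) 1 \<Longrightarrow> \<bar>mpartial (idx k) (cutoff_monomial idx l) x\<bar> \<le> B"
    using bounded_mpartial_cutoff_monomial by blast
  show ?thesis
  proof (rule that)
    show "0 \<le> real (CARD('n) * CARD('m) * CARD('m)) * B"
      using \<open>B \<ge> 0\<close> by simp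
    fix Y :: "real^'m^'n" and u :: "real^'N \<Rightarrow> real^'n" and x :: "real^'N"
    assume u: "u \<in> Cc_inf" and x: "x \<in> cbox (-1) 1" "x \<notin> stretch_box (anis_scale a)"
    show "norm (grad_a idx (transfer_competitor a idx Y u) x) \<le> real (CARD('n) * CARD('m) * CARD('m)) * B * norm Y"
      unfolding grad_a_transfer_competitor_outside[OF u x(2)]
      by (rule norm_mult_bounded_entries_le) (rule B[OF x(1)])
  qed
qed


section \<open>Energies\<close>

lemma lebesgue_integral_cubeQ:
  fixes g :: "real^'N::finite \<Rightarrow> real"
  assumes "continuous_on UNIV g"
  shows "(LINT x:cubeQ|lborel. g x) = integral (cbox (-1) 1) g"
proof -
  have "set_integrable lborel (cbox (-1) 1) g"
    unfolding set_integrable_def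
    by (rule borel_integrable_compact[OF compact_cbox continuous_on_subset[OF assms]]) auto
  then have "set_integrable lborel (box (-1) 1) g"
    by (rule set_integrable_subset) (auto simp: box_subset_cbox)
  then show ?thesis
    unfolding cubeQ_def using set_borel_integral_eq_integral(2) integral_open_interval by metis
qed

lemma measure_cubeQ: "measure lborel (cubeQ :: (real^'N::finite) set) = measure lborel (cbox (-1) (1::real^'N))"
  unfolding cubeQ_def measure_lborel_box_eq measure_lborel_cbox_eq by simp

lemma measure_cbox_minus_one_one_pos: "measure lborel (cbox (-1) (1::real^'N::finite)) > 0"
  by (rule content_pos_lt) (auto simp: inner_axis Basis_vec_def)

definition energy :: "('m::finite \<Rightarrow> ('N::finite \<Rightarrow> nat)) \<Rightarrow> (real^'m^'n::finite \<Rightarrow> real) \<Rightarrow> real^'m^'n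
    \<Rightarrow> (real^'N \<Rightarrow> real^'n) \<Rightarrow> real" where
  "energy idx F V u =
    (1 / measure lborel (cubeQ :: (real^'N) set)) * (LINT x:cubeQ|lborel. F (V + grad_a idx u x))"

lemma QF_eq_INF_energy: "QF idx F V = (INF u\<in>Cc_inf. ereal (energy idx F V u))"
  by (simp add: QF_def energy_def)

lemma continuous_on_grad_a:
  assumes "u \<in> Cc_inf"
  shows "continuous_on S (grad_a idx u)"
proof -
  have "continuous_on S (mpartial (idx k) (\<lambda>y. u y $ i))" for k i
    unfolding mpartial_def
    by (intro differentiable_imp_continuous_on differentiable_at_imp_differentiable_on
        smooth_fun_differentiable smooth_fun_Cc_inf[OF assms])
  then show ?thesis
    unfolding grad_a_def by (intro continuous_on_vec_lambda)
qed

lemma energy_eq_integral: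
  fixes idx :: "'m::finite \<Rightarrow> ('N::finite \<Rightarrow> nat)" and F :: "real^'m^'n::finite \<Rightarrow> real"
    and u :: "real^'N \<Rightarrow> real^'n"
  assumes "continuous_on UNIV F" and "u \<in> Cc_inf"
  shows "energy idx F V u =
    integral (cbox (-1) 1) (\<lambda>x. F (V + grad_a idx u x)) / measure lborel (cbox (-1) (1::real^'N::finite))"
proof -
  have "continuous_on UNIV (\<lambda>x::real^'N. F (V + grad_a idx u x))"
    by (rule continuous_on_compose2[OF assms(1)]) (auto intro!: continuous_intros continuous_on_grad_a[OF assms(2)])
  then show ?thesis
    by (simp add: energy_def lebesgue_integral_cubeQ measure_cubeQ)
qed

lemma zero_in_Cc_inf: "(\<lambda>x. 0) \<in> Cc_inf"
  by (simp add: Cc_inf_def smooth_fun_def)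

lemma QF_le_F:
  fixes idx :: "'m::finite \<Rightarrow> ('N::finite \<Rightarrow> nat)" and F :: "real^'m^'n::finite \<Rightarrow> real"
  shows "QF idx F X \<le> ereal (F X)"
proof -
  have "QF idx F X \<le> ereal (energy idx F X (\<lambda>x::real^'N. 0::real^'n))"
    unfolding QF_eq_INF_energy by (rule INF_lower[OF zero_in_Cc_inf])
  moreover have "grad_a idx (\<lambda>x::real^'N. 0::real^'n) x = 0" for x
    by (simp add: grad_a_def vec_eq_iff)
  then have "energy idx F X (\<lambda>x::real^'N. 0::real^'n) = F X"
    using measure_cbox_minus_one_one_pos[where 'N = 'N]
    by (simp add: energy_def lebesgue_integral_cubeQ measure_cubeQ)
  ultimately show ?thesis
    by simp
qed

lemma integral_le_stretch_plus_const:
  fixes g h :: "real^'N::finite \<Rightarrow> real"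
  assumes c: "\<forall>j. c j > 0" and box: "stretch_box c \<subseteq> cbox (-1) 1"
    and g: "g integrable_on cbox (-1) 1" and h: "h integrable_on cbox (-1) 1"
    and inside: "\<And>x. x \<in> stretch_box c \<Longrightarrow> h x = g (stretch c x)"
    and outside: "\<And>x. x \<in> cbox (-1) 1 \<Longrightarrow> x \<notin> stretch_box c \<Longrightarrow> h x \<le> M" and "M \<ge> 0"
  shows "integral (cbox (-1) 1) h \<le>
    integral (cbox (-1) 1) g / (\<Prod>j\<in>UNIV. c j) + M * measure lborel (cbox (-1) (1::real^'N))"
proof -
  define R where "R x = (if x \<in> stretch_box c then g (stretch c x) else 0)" for x
  have "(R has_integral integral (cbox (-1) 1) g / (\<Prod>j\<in>UNIV. c j)) (cbox (-1) 1)"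
    using has_integral_stretch_box[OF c g] box
    unfolding R_def has_integral_restrict_Int by (simp add: Int_absorb2)
  from has_integral_add[OF this has_integral_const[of M]]
  have "((\<lambda>x. R x + M) has_integral
      integral (cbox (-1) 1) g / (\<Prod>j\<in>UNIV. c j) + M * measure lborel (cbox (-1) (1::real^'N))) (cbox (-1) 1)"
    by (simp add: mult.commute)
  moreover have "h x \<le> R x + M" if "x \<in> cbox (-1) 1" for x
    using inside outside[OF that] \<open>M \<ge> 0\<close> by (auto simp: R_def)
  ultimately show ?thesis
    using has_integral_le[OF integrable_integral[OF h]] by blast
qed

lemma energy_transfer_competitor_le:
  fixes idx :: "'m::finite \<Rightarrow> ('N::finite \<Rightarrow> nat)" and F :: "real^'m^'n::finite \<Rightarrow> real"
    and u :: "real^'N \<Rightarrow> real^'n"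
  assumes a: "\<forall>j. a j \<ge> 1" and idx: "bij_betw idx UNIV (aidx a)" and F: "continuous_on UNIV F"
    and u: "u \<in> Cc_inf" and "M \<ge> 0"
    and outside: "\<And>x. x \<in> cbox (-1) 1 \<Longrightarrow> x \<notin> stretch_box (anis_scale a) \<Longrightarrow>
      F (X0 + grad_a idx (transfer_competitor a idx (X - X0) u) x) \<le> M"
  shows "energy idx F X0 (transfer_competitor a idx (X - X0) u) \<le>
    energy idx F X u / (\<Prod>j\<in>UNIV. anis_scale a j) + M"
proof -
  let ?V = "measure lborel (cbox (-1) (1::real^'N))"
  let ?P = "\<Prod>j\<in>UNIV. anis_scale a j"
  let ?g = "\<lambda>x. F (X + grad_a idx u x)"
  let ?h = "\<lambda>x. F (X0 + grad_a idx (transfer_competitor a idx (X - X0) u) x)"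
  have continuous: "continuous_on UNIV (\<lambda>x. F (V + grad_a idx v x))" if "v \<in> Cc_inf" for V v
    by (rule continuous_on_compose2[OF F]) (auto intro!: continuous_intros continuous_on_grad_a[OF that])
  have "stretch_box (anis_scale a) \<subseteq> cbox (-1) (1::real^'N)"
    using anis_stretch_box_subset_half_box[OF a] half_box_subset_cbox_three_quarters
      cbox_three_quarters_subset_cubeQ cubeQ_subset_cbox by blast
  then have "integral (cbox (-1) 1) ?h \<le> integral (cbox (-1) 1) ?g / ?P + M * ?V"
  proof (rule integral_le_stretch_plus_const[rotated])
    show "\<forall>j. anis_scale a j > 0"
      by (simp add: anis_scale_pos)
    show "?g integrable_on cbox (-1) 1"
      by (rule integrable_continuous[OF continuous_on_subset[OF continuous[OF u]]]) simp
    show "?h integrable_on cbox (-1) 1"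
      by (rule integrable_continuous[OF continuous_on_subset[OF continuous[OF transfer_competitor_Cc_inf[OF a u]]]]) simp
    show "?h x = ?g (stretch (anis_scale a) x)" if "x \<in> stretch_box (anis_scale a)" for x
      by (simp add: grad_a_transfer_competitor_inside[OF a idx u that] algebra_simps)
  qed (use outside \<open>M \<ge> 0\<close> in auto)
  moreover have "?V > 0" "?P > 0"
    by (simp_all add: measure_cbox_minus_one_one_pos prod_pos anis_scale_pos)
  ultimately have "integral (cbox (-1) 1) ?h / ?V \<le> (integral (cbox (-1) 1) ?g / ?V) / ?P + M"
    by (simp add: field_simps)
  then show ?thesis
    by (simp add: energy_eq_integral[OF F] u transfer_competitor_Cc_inf[OF a u])
qed


lemma powr_add_le:
  fixes a b p :: real
  assumes "0 \<le> a" "0 \<le> b" "0 \<le> p"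
  shows "(a + b) powr p \<le> 2 powr p * (a powr p + b powr p)"
proof -
  have "(a + b) powr p \<le> (2 * max a b) powr p"
    by (rule powr_mono2) (use assms in auto)
  also have "\<dots> = 2 powr p * max a b powr p"
    using assms by (simp add: powr_mult)
  also have "max a b powr p \<le> a powr p + b powr p"
    by (simp add: max_def)
  finally show ?thesis
    by (simp add: mult_left_mono)
qed

lemma affine_powr_le:
  fixes A K p t :: real
  assumes "0 \<le> A" "0 \<le> K" "0 \<le> p" "0 \<le> t"
  shows "(A + K * t) powr p + 1 \<le> (2 powr p * (A powr p + K powr p) + 1) * (t powr p + 1)"
proof -
  have "(A + K * t) powr p \<le> 2 powr p * (A powr p + K powr p * t powr p)"
    using powr_add_le[of A "K * t" p] assms by (simp add: powr_mult)
  also have "\<dots> \<le> 2 powr p * (A powr p + K powr p) * (t powr p + 1)"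
    by (simp add: algebra_simps)
  finally have "(A + K * t) powr p \<le> 2 powr p * (A powr p + K powr p) * (t powr p + 1)" .
  moreover have "(2 powr p * (A powr p + K powr p) + 1) * (t powr p + 1) =
      2 powr p * (A powr p + K powr p) * (t powr p + 1) + (t powr p + 1)"
    by (simp add: algebra_simps)
  moreover have "0 \<le> t powr p"
    by simp
  ultimately show ?thesis
    by linarith
qed

lemma growth_shifted_le:
  fixes F :: "'a::real_normed_vector \<Rightarrow> real"
  assumes growth: "\<And>X. \<bar>F X\<bar> \<le> C * (norm X powr p + 1)" and "0 \<le> C" "0 \<le> p" "0 \<le> K"
    and G: "norm G \<le> K * norm (X - X0)"
  shows "F (X0 + G) \<le> C * (2 powr p * (((1 + K) * norm X0) powr p + K powr p) + 1) * (norm X powr p + 1)"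
proof -
  have "norm (X0 + G) \<le> (1 + K) * norm X0 + K * norm X"
    using norm_triangle_ineq[of X0 G] G mult_left_mono[OF norm_triangle_ineq4[of X X0] \<open>0 \<le> K\<close>]
    by (simp add: algebra_simps)
  then have "norm (X0 + G) powr p + 1 \<le> ((1 + K) * norm X0 + K * norm X) powr p + 1"
    using powr_mono2[OF \<open>0 \<le> p\<close> norm_ge_zero] by simp
  also have "\<dots> \<le> (2 powr p * (((1 + K) * norm X0) powr p + K powr p) + 1) * (norm X powr p + 1)"
    by (rule affine_powr_le) (use \<open>0 \<le> K\<close> \<open>0 \<le> p\<close> in simp_all)
  finally show ?thesis
    using growth[of "X0 + G"] mult_left_mono[OF _ \<open>0 \<le> C\<close>] by (fastforce simp: mult.assoc)
qed

lemma energy_lower_bound: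
  fixes idx :: "'m::finite \<Rightarrow> ('N::finite \<Rightarrow> nat)" and F :: "real^'m^'n::finite \<Rightarrow> real"
  assumes a: "\<forall>j. a j \<ge> 1" and idx: "bij_betw idx UNIV (aidx a)" and "0 \<le> p"
    and F: "continuous_on UNIV F" and "0 \<le> C" and growth: "\<And>X. \<bar>F X\<bar> \<le> C * (norm X powr p + 1)"
    and q: "\<And>v. v \<in> Cc_inf \<Longrightarrow> q \<le> energy idx F X0 (v :: real^'N \<Rightarrow> real^'n)"
  obtains C1 where "\<And>X u. u \<in> Cc_inf \<Longrightarrow> - C1 * (norm X powr p + 1) \<le> energy idx F X (u :: real^'N \<Rightarrow> real^'n)"
proof -
  obtain K where "K \<ge> 0" and K: "\<And>Y u x. u \<in> Cc_inf \<Longrightarrow> x \<in> cbox (-1) 1 \<Longrightarrow> x \<notin> stretch_box (anis_scale a) \<Longrightarrow>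
      norm (grad_a idx (transfer_competitor a idx Y u) x) \<le> K * norm (Y :: real^'m^'n)"
    using norm_grad_a_transfer_competitor_outside_le by blast
  define P where "P = (\<Prod>j\<in>UNIV. anis_scale a j)"
  have "P > 0"
    unfolding P_def by (simp add: prod_pos anis_scale_pos)
  define D where "D = C * (2 powr p * (((1 + K) * norm X0) powr p + K powr p) + 1)"
  have "- (P * \<bar>q\<bar> + P * D) * (norm X powr p + 1) \<le> energy idx F X u" if u: "u \<in> Cc_inf" for X u
  proof -
    define T where "T = norm X powr p"
    have "0 \<le> D * (T + 1)"
      unfolding D_def T_def using \<open>0 \<le> C\<close> by simp
    have "q \<le> energy idx F X0 (transfer_competitor a idx (X - X0) u)"
      by (rule q[OF transfer_competitor_Cc_inf[OF a u]])
    also have "\<dots> \<le> energy idx F X u / P + D * (T + 1)"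
      unfolding P_def D_def T_def
      using growth_shifted_le[OF growth \<open>0 \<le> C\<close> \<open>0 \<le> p\<close> \<open>0 \<le> K\<close> K[OF u]] \<open>0 \<le> D * (T + 1)\<close>
      by (intro energy_transfer_competitor_le[OF a idx F u]) (simp_all add: D_def T_def)
    finally have "P * q - P * D * (T + 1) \<le> energy idx F X u"
      using \<open>P > 0\<close> by (simp add: field_simps)
    moreover have "- (P * \<bar>q\<bar>) * (T + 1) \<le> P * q"
    proof -
      have "- \<bar>q\<bar> * (T + 1) \<le> q"
        using abs_ge_minus_self[of q] mult_left_mono[of 1 "T + 1" "\<bar>q\<bar>"] unfolding T_def by simp
      from mult_left_mono[OF this less_imp_le[OF \<open>P > 0\<close>]] show ?thesis
        by (simp add: algebra_simps)
    qed
    ultimately show ?thesis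
      unfolding T_def by (simp add: algebra_simps)
  qed
  then show ?thesis
    using that by blast
qed

lemma ereal_between_abs_le:
  assumes "ereal (- c) \<le> z" "z \<le> ereal d" "c \<le> B" "d \<le> B"
  shows "\<exists>r. z = ereal r \<and> \<bar>r\<bar> \<le> B"
  using assms by (cases z) auto

theorem mainTheorem10:
  fixes a :: "'N::finite \<Rightarrow> nat"
    and idx :: "'m::finite \<Rightarrow> ('N \<Rightarrow> nat)"
    and F :: "real^'m^'n::finite \<Rightarrow> real"
    and p C :: real
  assumes a_pos: "\<forall>j. a j \<ge> 1"
    and idx_bij: "bij_betw idx UNIV (aidx a)"
    and p: "1 < p"
    and F_cont: "continuous_on UNIV F"
    and C: "0 < C"
    and F_growth: "\<forall>X. \<bar>F X\<bar> \<le> C * (norm X powr p + 1)"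
  shows "(\<forall>X. QF idx F X = -\<infinity>) \<or>
         (\<exists>C'. \<forall>X. \<exists>r. QF idx F X = ereal r \<and> \<bar>r\<bar> \<le> C' * (norm X powr p + 1))"
proof (cases "\<forall>X. QF idx F X = -\<infinity>")
  case False
  then obtain X0 where "QF idx F X0 \<noteq> -\<infinity>"
    by blast
  with QF_le_F[of idx F X0] obtain q where q: "QF idx F X0 = ereal q"
    by (cases "QF idx F X0") auto
  have q_le: "q \<le> energy idx F X0 v" if "v \<in> Cc_inf" for v :: "real^'N \<Rightarrow> real^'n"
    using INF_lower[OF that, of "\<lambda>v. ereal (energy idx F X0 v)"] q by (simp add: QF_eq_INF_energy)
  obtain C1 where C1: "\<And>X u. u \<in> Cc_inf \<Longrightarrow> - C1 * (norm X powr p + 1) \<le> energy idx F X (u :: real^'N \<Rightarrow> real^'n)"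
    by (rule energy_lower_bound[OF a_pos idx_bij _ F_cont _ F_growth[rule_format] q_le]) (use p C in auto)
  have "\<exists>r. QF idx F X = ereal r \<and> \<bar>r\<bar> \<le> max C C1 * (norm X powr p + 1)" for X
  proof (rule ereal_between_abs_le)
    show "ereal (- (C1 * (norm X powr p + 1))) \<le> QF idx F X"
      unfolding QF_eq_INF_energy by (rule INF_greatest) (simp add: C1[simplified])
    have "F X \<le> C * (norm X powr p + 1)"
      using F_growth abs_le_iff by blast
    then show "QF idx F X \<le> ereal (C * (norm X powr p + 1))"
      using QF_le_F[of idx F X] by (meson ereal_less_eq(3) order_trans)
    show "C1 * (norm X powr p + 1) \<le> max C C1 * (norm X powr p + 1)"
      and "C * (norm X powr p + 1) \<le> max C C1 * (norm X powr p + 1)"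
      by (simp_all add: mult_right_mono)
  qed
  then show ?thesis
    by blast
qed simp

end
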